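(* (Necessity of a threshold.) Let $\phi:[0,\infty)\to[0,\infty)$ be bounded, with $\phi(h)\ge1$ for $0\le h\le4$ (so $D_\phi\ge4$) and $\phi(h)=0$ for $h>8$. Consider the Cucker–Smale system on $\mathbb R$ with $N=2$, initial data $x_1(0)=-1$, $x_2(0)=1$, $v_1(0)=-1$, $v_2(0)=1$. If $\kappa\le\frac{1}{8\int_0^\infty\phi(h)\,dh}$, then $x_2(t)-x_1(t)\to\infty$ as $t\to\infty$; in fact after some finite time $x_2-x_1>8$ and from then on both particles move with constant, distinct velocities, so no flocking occurs.
   Context: The Cucker–Smale system: $\dot x_i=v_i$, $\dot v_i=\frac{\kappa}{N}\sum_{j=1}^N\phi(|x_i-x_j|)(v_j-v_i)$, $i=1,\dots,N$, with amplitude $\kappa>0$. *)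

theory Defs
  imports "HOL-Analysis.Analysis"
begin

definition cs_solution ::
  "real \<Rightarrow> (real \<Rightarrow> real) \<Rightarrow> nat \<Rightarrow> (nat \<Rightarrow> real \<Rightarrow> real) \<Rightarrow> (nat \<Rightarrow> real \<Rightarrow> real) \<Rightarrow> bool"
where
  "cs_solution kappa phi N x v \<longleftrightarrow>
     (\<forall>i\<in>{1..N}. \<forall>t\<ge>0.
        (x i has_real_derivative v i t) (at t within {0..}) \<and>
        (v i has_real_derivative
            (kappa / real N) * (\<Sum>j\<in>{1..N}. phi \<bar>x i t - x j t\<bar> * (v j t - v i t)))
          (at t within {0..}))"

end

theory Submission
  imports Defs
begin

text \<open>Write \<open>d = x\<^sub>2 - x\<^sub>1\<close> and \<open>w = v\<^sub>2 - v\<^sub>1\<close>. Then \<open>d' = w\<close> and \<open>w' = -\<kappa> \<phi>(|d|) w\<close>,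
  so \<open>w\<close> never changes sign and \<open>d\<close> is increasing. Substituting \<open>h = d(s)\<close> gives
  \<open>w(t) = w(0) - \<kappa> \<integral>\<^bsub>d(0)\<^esub>\<^bsup>d(t)\<^esup> \<phi> \<ge> 2 - \<kappa> \<integral>\<^sub>0\<^sup>\<infinity> \<phi> \<ge> 15/8\<close>, hence
  \<open>d(t) \<ge> 2 + 15t/8\<close>. From \<open>t = 4\<close> on the particles are farther apart than the interaction
  range 8, so their velocities are frozen.\<close>

lemma DERIV_within_Icc_continuous_interior:
  fixes f f' :: "real \<Rightarrow> real"
  assumes "{a..b} \<subseteq> S"
    and "\<And>s. s \<in> {a..b} \<Longrightarrow> (f has_real_derivative f' s) (at s within S)"
  shows "continuous_on {a..b} f"
    and "\<And>s. a < s \<Longrightarrow> s < b \<Longrightarrow> (f has_real_derivative f' s) (at s)"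
proof -
  have deriv: "\<And>s. s \<in> {a..b} \<Longrightarrow> (f has_real_derivative f' s) (at s within {a..b})"
    using assms DERIV_subset by blast
  show "continuous_on {a..b} f"
    using deriv by (meson DERIV_continuous continuous_on_eq_continuous_within)
  show "(f has_real_derivative f' s) (at s)" if "a < s" "s < b" for s
    using deriv[of s] at_within_Icc_at[of a s b] that by auto
qed

lemma DERIV_within_nonneg_imp_increasing:
  fixes f f' :: "real \<Rightarrow> real"
  assumes "a \<le> b" "{a..b} \<subseteq> S"
    and "\<And>s. s \<in> {a..b} \<Longrightarrow> (f has_real_derivative f' s) (at s within S)"
    and "\<And>s. a < s \<Longrightarrow> s < b \<Longrightarrow> f' s \<ge> 0"
  shows "f a \<le> f b"
  using assms DERIV_within_Icc_continuous_interior[OF assms(2,3)]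
  by (intro DERIV_nonneg_imp_increasing_open[OF \<open>a \<le> b\<close>]) blast+

lemma DERIV_within_pos_imp_increasing:
  fixes f f' :: "real \<Rightarrow> real"
  assumes "a < b" "{a..b} \<subseteq> S"
    and "\<And>s. s \<in> {a..b} \<Longrightarrow> (f has_real_derivative f' s) (at s within S)"
    and "\<And>s. a < s \<Longrightarrow> s < b \<Longrightarrow> f' s > 0"
  shows "f a < f b"
  using assms DERIV_within_Icc_continuous_interior[OF assms(2,3)]
  by (intro DERIV_pos_imp_increasing_open[OF \<open>a < b\<close>]) blast+

lemma DERIV_within_lower_bound_imp_linear_growth:
  fixes f f' :: "real \<Rightarrow> real"
  assumes "a \<le> b" "{a..b} \<subseteq> S"
    and "\<And>s. s \<in> {a..b} \<Longrightarrow> (f has_real_derivative f' s) (at s within S)"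
    and "\<And>s. s \<in> {a..b} \<Longrightarrow> c \<le> f' s"
  shows "f a + c * (b - a) \<le> f b"
proof -
  have "(\<lambda>s. f s - c * s) a \<le> (\<lambda>s. f s - c * s) b"
  proof (rule DERIV_within_nonneg_imp_increasing
      [where f = "\<lambda>s. f s - c * s" and f' = "\<lambda>s. f' s - c"])
    show "((\<lambda>s. f s - c * s) has_real_derivative f' s - c) (at s within S)"
      if "s \<in> {a..b}" for s
      using DERIV_diff[OF assms(3)[OF that] DERIV_cmult[OF DERIV_ident, of c]] by simp
  qed (use assms in auto)
  then show ?thesis
    by (simp add: algebra_simps)
qed

text \<open>The weight \<open>w\<^sup>2 e\<^sup>2\<^sup>C\<^sup>t\<close> is nondecreasing, so \<open>w\<close> cannot reach 0.\<close>

lemma linear_ode_solution_pos: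
  fixes w a :: "real \<Rightarrow> real"
  assumes deriv: "\<And>s. s \<ge> 0 \<Longrightarrow> (w has_real_derivative - a s * w s) (at s within {0..})"
    and bound: "\<And>s. s \<ge> 0 \<Longrightarrow> a s \<le> C"
    and "w 0 > 0" "t \<ge> 0"
  shows "w t > 0"
proof (rule ccontr)
  define z where "z s = (w s)\<^sup>2 * exp (2 * C * s)" for s
  have z_deriv: "(z has_real_derivative 2 * exp (2 * C * s) * (w s)\<^sup>2 * (C - a s))
      (at s within {0..})" if "s \<ge> 0" for s
  proof -
    have "((\<lambda>s. exp (2 * C * s)) has_real_derivative exp (2 * C * s) * (2 * C))
        (at s within {0..})"
      by (auto intro!: derivative_eq_intros)
    from DERIV_mult[OF DERIV_mult[OF deriv[OF that] deriv[OF that]] this]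
    show ?thesis
      unfolding z_def power2_eq_square by (rule DERIV_cong) (simp add: algebra_simps)
  qed
  have z_ge: "z 0 \<le> z s" if "s \<ge> 0" for s
  proof (rule DERIV_within_nonneg_imp_increasing[OF that _ z_deriv])
    show "0 \<le> 2 * exp (2 * C * r) * (w r)\<^sup>2 * (C - a r)" if "0 < r" for r
      using bound[of r] that by simp
  qed auto
  assume "\<not> w t > 0"
  moreover have "continuous_on {0..t} w"
    using deriv by (intro DERIV_within_Icc_continuous_interior(1)[of 0 t "{0..}"]) auto
  ultimately obtain s where "0 \<le> s" "w s = 0"
    using IVT2'[of w t 0 0] \<open>w 0 > 0\<close> \<open>t \<ge> 0\<close> by auto
  then show False
    using z_ge[of s] \<open>w 0 > 0\<close> by (simp add: z_def)
qed

text \<open>For \<open>d' = w > 0\<close> and \<open>w' = -g(d) w\<close>, the quantity \<open>w + G(d)\<close> with \<open>G' = g\<close> is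
  conserved; this is the change of variables \<open>h = d(s)\<close> in \<open>\<integral> w' = -\<integral> g(d(s)) d'(s) ds\<close>.\<close>

lemma damped_velocity_eq_integral:
  fixes d w g :: "real \<Rightarrow> real"
  assumes "0 \<le> t"
    and d_deriv: "\<And>s. s \<in> {0..t} \<Longrightarrow> (d has_real_derivative w s) (at s within {0..})"
    and w_deriv: "\<And>s. s \<in> {0..t} \<Longrightarrow>
      (w has_real_derivative - g (d s) * w s) (at s within {0..})"
    and w_pos: "\<And>s. s \<in> {0..t} \<Longrightarrow> w s > 0"
    and g_int: "g absolutely_integrable_on {d 0..d t}"
  shows "w t = w 0 - integral {d 0..d t} g"
proof -
  have d_less: "d a < d b" if "0 \<le> a" "a < b" "b \<le> t" for a b
  proof (rule DERIV_within_pos_imp_increasing[where f = d and S = "{0..}" and f' = w])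
    show "(d has_real_derivative w s) (at s within {0..})" if "s \<in> {a..b}" for s
      using that \<open>0 \<le> a\<close> \<open>b \<le> t\<close> by (intro d_deriv) auto
    show "w s > 0" if "a < s" "s < b" for s
      using that \<open>0 \<le> a\<close> \<open>b \<le> t\<close> by (intro w_pos) auto
  qed (use that in auto)
  then have d_le: "d a \<le> d b" if "0 \<le> a" "a \<le> b" "b \<le> t" for a b
    using that by (cases "a = b") (auto intro: less_imp_le)
  have inj: "inj_on d {0..t}"
  proof (rule inj_onI)
    fix a b assume "a \<in> {0..t}" "b \<in> {0..t}" "d a = d b"
    then show "a = b"
      using d_less[of a b] d_less[of b a] by (cases a b rule: linorder_cases) auto
  qed
  have "continuous_on {0..t} d"
    using d_deriv by (intro DERIV_within_Icc_continuous_interior(1)[of 0 t "{0..}"]) auto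
  then have image: "d ` {0..t} = {d 0..d t}"
  proof (intro subset_antisym subsetI)
    fix y assume "y \<in> {d 0..d t}"
    then obtain s where "0 \<le> s" "s \<le> t" "d s = y"
      using IVT'[of d 0 y t] \<open>0 \<le> t\<close> \<open>continuous_on {0..t} d\<close> by auto
    then show "y \<in> d ` {0..t}" by auto
  next
    fix y assume "y \<in> d ` {0..t}"
    then obtain s where "s \<in> {0..t}" "y = d s" by auto
    then show "y \<in> {d 0..d t}"
      using d_le[of 0 s] d_le[of s t] by auto
  qed
  have d_deriv': "(d has_real_derivative w s) (at s within {0..t})" if "s \<in> {0..t}" for s
    using d_deriv[OF that] by (rule DERIV_subset) auto
  have "(\<lambda>s. \<bar>w s\<bar> * g (d s)) absolutely_integrable_on {0..t} \<and>
      integral {0..t} (\<lambda>s. \<bar>w s\<bar> * g (d s)) = integral {d 0..d t} g"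
    using has_absolute_integral_change_of_variables_1'[of "{0..t}" d w g, OF _ d_deriv' inj]
      g_int unfolding image by simp
  then have substitution: "integral {0..t} (\<lambda>s. \<bar>w s\<bar> * g (d s)) = integral {d 0..d t} g"
    by (rule conjunct2)
  have "((\<lambda>s. - g (d s) * w s) has_integral (w t - w 0)) {0..t}"
  proof (intro fundamental_theorem_of_calculus[OF \<open>0 \<le> t\<close>])
    fix s assume "s \<in> {0..t}"
    have "(w has_real_derivative - g (d s) * w s) (at s within {0..t})"
      using w_deriv[OF \<open>s \<in> {0..t}\<close>] by (rule DERIV_subset) auto
    then show "(w has_vector_derivative - g (d s) * w s) (at s within {0..t})"
      by (simp add: has_real_derivative_iff_has_vector_derivative)
  qed
  then have "w t - w 0 = integral {0..t} (\<lambda>s. - g (d s) * w s)"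
    by (rule integral_unique[symmetric])
  also have "\<dots> = integral {0..t} (\<lambda>s. - (\<bar>w s\<bar> * g (d s)))"
    by (intro integral_cong) (simp add: w_pos abs_of_pos)
  also have "\<dots> = - integral {0..t} (\<lambda>s. \<bar>w s\<bar> * g (d s))"
    by (rule integral_neg)
  finally show ?thesis
    using substitution by simp
qed

lemma cs_solution_two_particles:
  assumes sol: "cs_solution kappa phi 2 x v" and "0 \<le> t"
  shows "(x 1 has_real_derivative v 1 t) (at t within {0..})"
    and "(x 2 has_real_derivative v 2 t) (at t within {0..})"
    and "(v 1 has_real_derivative kappa / 2 * phi \<bar>x 2 t - x 1 t\<bar> * (v 2 t - v 1 t))
           (at t within {0..})"
    and "(v 2 has_real_derivative - (kappa / 2 * phi \<bar>x 2 t - x 1 t\<bar> * (v 2 t - v 1 t)))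
           (at t within {0..})"
proof -
  have particles: "{1..2::nat} = {1, 2}"
    by auto
  note eqs = sol[unfolded cs_solution_def particles, rule_format, OF _ \<open>0 \<le> t\<close>]
  show "(x 1 has_real_derivative v 1 t) (at t within {0..})"
    and "(x 2 has_real_derivative v 2 t) (at t within {0..})"
    using eqs by auto
  show "(v 1 has_real_derivative kappa / 2 * phi \<bar>x 2 t - x 1 t\<bar> * (v 2 t - v 1 t))
      (at t within {0..})"
    using conjunct2[OF eqs[of 1]] by (rule DERIV_cong) (auto simp: abs_minus_commute)
  show "(v 2 has_real_derivative - (kappa / 2 * phi \<bar>x 2 t - x 1 t\<bar> * (v 2 t - v 1 t)))
      (at t within {0..})"
    using conjunct2[OF eqs[of 2]] by (rule DERIV_cong) (auto simp: field_simps)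
qed

lemma cs_solution_two_relative_motion:
  assumes "cs_solution kappa phi 2 x v" and "0 \<le> t"
  shows "((\<lambda>t. x 2 t - x 1 t) has_real_derivative v 2 t - v 1 t) (at t within {0..})"
    and "((\<lambda>t. v 2 t - v 1 t) has_real_derivative
           - (kappa * phi \<bar>x 2 t - x 1 t\<bar>) * (v 2 t - v 1 t)) (at t within {0..})"
  using cs_solution_two_particles[OF assms]
  by (auto intro!: derivative_eq_intros elim!: DERIV_cong simp: algebra_simps)

lemma cs_solution_two_relative_velocity_bounds:
  assumes phi_nonneg: "\<forall>h\<ge>0. phi h \<ge> 0"
    and phi_bounded: "\<exists>B. \<forall>h\<ge>0. phi h \<le> B"
    and phi_int: "phi integrable_on {0..}"
    and "0 \<le> kappa"
    and sol: "cs_solution kappa phi 2 x v"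
    and "x 1 0 \<le> x 2 0" "v 1 0 < v 2 0" "0 \<le> t"
  shows "v 1 t < v 2 t"
    and "v 2 0 - v 1 0 - kappa * integral {0..} phi \<le> v 2 t - v 1 t"
proof -
  define d where "d t = x 2 t - x 1 t" for t
  define w where "w t = v 2 t - v 1 t" for t
  define g where "g h = kappa * phi \<bar>h\<bar>" for h
  note motion = cs_solution_two_relative_motion[OF sol, folded d_def w_def]
  obtain B where B: "\<forall>h\<ge>0. phi h \<le> B"
    using phi_bounded by blast
  have w_pos: "w s > 0" if "0 \<le> s" for s
  proof (rule linear_ode_solution_pos
      [where w = w and t = s and a = "\<lambda>s. kappa * phi \<bar>d s\<bar>" and C = "kappa * B"])
    show "(w has_real_derivative - (kappa * phi \<bar>d r\<bar>) * w r) (at r within {0..})"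
      if "0 \<le> r" for r
      using motion(2)[OF that] .
    show "kappa * phi \<bar>d r\<bar> \<le> kappa * B" for r
      using B \<open>0 \<le> kappa\<close> by (simp add: mult_left_mono)
  qed (use \<open>v 1 0 < v 2 0\<close> that in \<open>simp_all add: w_def\<close>)
  then show "v 1 t < v 2 t"
    using \<open>0 \<le> t\<close> by (simp add: w_def)
  have "d 0 \<le> d t"
    using motion(1) w_pos \<open>0 \<le> t\<close>
    by (intro DERIV_within_nonneg_imp_increasing[where f = d and S = "{0..}" and f' = w])
       (auto intro: less_imp_le)
  moreover have "d 0 \<ge> 0"
    using \<open>x 1 0 \<le> x 2 0\<close> by (simp add: d_def)
  ultimately have range: "{d 0..d t} \<subseteq> {0..}"
    by auto
  have phi_int': "phi integrable_on {d 0..d t}"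
    using phi_int range by (rule integrable_on_subinterval)
  have g_eq: "g h = kappa * phi h" if "h \<in> {d 0..d t}" for h
    using that range by (auto simp: g_def)
  have "g integrable_on {d 0..d t}"
    using integrable_cmul[OF phi_int', of kappa] g_eq by (auto intro: integrable_eq)
  then have "g absolutely_integrable_on {d 0..d t}"
    using g_eq range phi_nonneg \<open>0 \<le> kappa\<close> by (intro nonnegative_absolutely_integrable_1) auto
  then have "w t = w 0 - integral {d 0..d t} g"
    using motion w_pos \<open>0 \<le> t\<close> unfolding g_def
    by (intro damped_velocity_eq_integral[where d = d and w = w]) auto
  also have "integral {d 0..d t} g = kappa * integral {d 0..d t} phi"
    using integral_cong[of "{d 0..d t}" g "\<lambda>h. kappa * phi h"] g_eq by simp
  finally have "w t = w 0 - kappa * integral {d 0..d t} phi" .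
  moreover have "kappa * integral {d 0..d t} phi \<le> kappa * integral {0..} phi"
    using phi_int' phi_int range phi_nonneg \<open>0 \<le> kappa\<close>
    by (intro mult_left_mono integral_subset_le) auto
  ultimately show "v 2 0 - v 1 0 - kappa * integral {0..} phi \<le> v 2 t - v 1 t"
    by (simp add: w_def)
qed

lemma cs_solution_two_distance_lower_bound:
  assumes "\<forall>h\<ge>0. phi h \<ge> 0" and "\<exists>B. \<forall>h\<ge>0. phi h \<le> B"
    and "phi integrable_on {0..}" and "0 \<le> kappa"
    and sol: "cs_solution kappa phi 2 x v"
    and "x 1 0 \<le> x 2 0" "v 1 0 < v 2 0" "0 \<le> t"
  shows "x 2 0 - x 1 0 + (v 2 0 - v 1 0 - kappa * integral {0..} phi) * t \<le> x 2 t - x 1 t"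
proof -
  have "(\<lambda>t. x 2 t - x 1 t) 0 + (v 2 0 - v 1 0 - kappa * integral {0..} phi) * (t - 0)
      \<le> (\<lambda>t. x 2 t - x 1 t) t"
    using cs_solution_two_relative_motion(1)[OF sol]
      cs_solution_two_relative_velocity_bounds(2)[OF assms(1-7)] \<open>0 \<le> t\<close>
    by (intro DERIV_within_lower_bound_imp_linear_growth[where f = "\<lambda>t. x 2 t - x 1 t"
          and a = 0 and b = t and S = "{0..}" and f' = "\<lambda>s. v 2 s - v 1 s"]) auto
  then show ?thesis
    by simp
qed

lemma cs_solution_two_velocities_frozen:
  assumes sol: "cs_solution kappa phi 2 x v" and "0 \<le> T"
    and no_interaction: "\<And>s. T \<le> s \<Longrightarrow> phi \<bar>x 2 s - x 1 s\<bar> = 0"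
    and "T \<le> t"
  shows "v 1 t = v 1 T" and "v 2 t = v 2 T"
proof -
  have "v i t = v i T" if "i \<in> {1, 2}" for i
  proof -
    have "\<exists>c. \<forall>s\<in>{T..}. v i s = c"
    proof (rule has_field_derivative_zero_constant)
      fix s assume "s \<in> {T..}"
      then have "(v i has_real_derivative 0) (at s within {0..})"
        using cs_solution_two_particles(3,4)[OF sol, of s] no_interaction[of s] that \<open>0 \<le> T\<close>
        by auto
      then show "(v i has_real_derivative 0) (at s within {T..})"
        by (rule DERIV_subset) (use \<open>0 \<le> T\<close> in auto)
    qed simp
    then show ?thesis
      using \<open>T \<le> t\<close> by auto
  qed
  then show "v 1 t = v 1 T" and "v 2 t = v 2 T"
    by simp_all
qed

theorem mainTheorem8:
  fixes phi :: "real \<Rightarrow> real" and kappa :: real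
    and x v :: "nat \<Rightarrow> real \<Rightarrow> real"
  assumes phi_nonneg: "\<forall>h\<ge>0. phi h \<ge> 0"
    and phi_bounded: "\<exists>B. \<forall>h\<ge>0. phi h \<le> B"
    and phi_ge1: "\<forall>h. 0 \<le> h \<and> h \<le> 4 \<longrightarrow> phi h \<ge> 1"
    and phi_zero: "\<forall>h>8. phi h = 0"
    and phi_int: "phi integrable_on {0..}"
    and kappa_pos: "kappa > 0"
    and kappa_le: "kappa \<le> 1 / (8 * integral {0..} phi)"
    and sol: "cs_solution kappa phi 2 x v"
    and init: "x 1 0 = -1" "x 2 0 = 1" "v 1 0 = -1" "v 2 0 = 1"
  shows "filterlim (\<lambda>t. x 2 t - x 1 t) at_top at_top \<and>
         (\<exists>T\<ge>0. \<forall>t\<ge>T. x 2 t - x 1 t > 8 \<and> v 1 t = v 1 T \<and> v 2 t = v 2 T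
                       \<and> v 1 T \<noteq> v 2 T)"
proof -
  \<comment> \<open>\<open>phi_ge1\<close> is not needed: with \<open>kappa > 0\<close>, \<open>kappa_le\<close> already excludes the junk case
    \<open>integral {0..} phi \<le> 0\<close>, in which the bound \<open>1 / (8 * integral {0..} phi)\<close> is \<open>\<le> 0\<close>.\<close>
  have "0 < integral {0..} phi"
    using kappa_le kappa_pos divide_le_0_iff[of 1 "8 * integral {0..} phi"] by linarith
  then have kappa_small: "kappa * integral {0..} phi \<le> 1 / 8"
    using kappa_le by (simp add: field_simps)
  have "x 1 0 \<le> x 2 0" and "v 1 0 < v 2 0"
    using init by simp_all
  note hyps = phi_nonneg phi_bounded phi_int less_imp_le[OF kappa_pos] sol this
  note two_particle_bounds = cs_solution_two_relative_velocity_bounds(1)[OF hyps]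
    cs_solution_two_distance_lower_bound[OF hyps]
  have distance: "2 + 15 / 8 * t \<le> x 2 t - x 1 t" if "0 \<le> t" for t
    using two_particle_bounds(2)[OF that] kappa_small init
      mult_right_mono[OF _ that, of "15 / 8" "2 - kappa * integral {0..} phi"]
    by simp
  have "eventually (\<lambda>t. t \<le> x 2 t - x 1 t) at_top"
    using eventually_ge_at_top[of 0] by (rule eventually_mono) (use distance in fastforce)
  with filterlim_ident have diverges: "filterlim (\<lambda>t. x 2 t - x 1 t) at_top at_top"
    by (rule filterlim_at_top_mono)
  have apart: "8 < x 2 t - x 1 t" if "4 \<le> t" for t
    using distance[of t] that by linarith
  have "phi \<bar>x 2 t - x 1 t\<bar> = 0" if "4 \<le> t" for t
    using phi_zero apart[OF that] by simp
  from apart cs_solution_two_velocities_frozen[OF sol _ this] two_particle_bounds(1)[of 4]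
  have frozen:
    "\<forall>t\<ge>4. x 2 t - x 1 t > 8 \<and> v 1 t = v 1 4 \<and> v 2 t = v 2 4 \<and> v 1 4 \<noteq> v 2 4"
    by force
  show ?thesis
    by (intro conjI exI[of _ "4::real"]) (fact diverges, simp, fact frozen)
qed

end
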